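(* Assume the setting of the cascaded and direct models with $K\ge 2$, $d_k=2^{k-1}d_1$, and $\sigma_k=2^{-(k-1)}\sigma$, and let $L_A$ and $L_1,\dots,L_K$ be the transport costs defined there. Assume the inference-cost model in which a flow on $\mathbb{R}^d$ with transport cost $L$ has expected inference time $\alpha\,N\,d$, where $N=C\,L$ is its number of function evaluations and $\alpha,C>0$ are fixed constants. Let $$T_A=\alpha C\,L_A\,d_K,\qquad T_B=\sum_{k=1}^K\alpha C\,L_k\,d_k .$$ Then $T_A>T_B$; equivalently, $$\sum_{k=1}^K d_k L_k<d_K L_A .$$
   Context: $|\cdot|$ is the Euclidean norm. For $2\le k\le K$, fix a partition of $\{1,\dots,d_k\}$ into $d_{k-1}$ blocks of size $2$. The operator $D_k:\mathbb{R}^{d_k}\to\mathbb{R}^{d_{k-1}}$ averages the entries within each block. The operator $U_k:\mathbb{R}^{d_{k-1}}\to\mathbb{R}^{d_k}$ copies entry $j$ to every coordinate of block $j$. Let $x$ be a random vector in $\mathbb{R}^{d_K}$ with finite second moment, and set $x^{(K)}=x$ and $x^{(k-1)}=D_k x^{(k)}$. Direct model: $L_A=\mathbb{E}|x-x_0|^2$, where $x_0\sim\mathcal N(0,\sigma^2I_{d_K})$ is independent of $x$. Cascaded model: - $L_1=\mathbb{E}|x^{(1)}-x_0^{(1)}|^2$, where $x_0^{(1)}\sim\mathcal N(0,\sigma^2 I_{d_1})$ is independent of $x$. - For $k\ge2$, $L_k=\mathbb{E}|x^{(k)}-x_0^{(k)}|^2$, where $x_0^{(k)}=U_k(D_k x^{(k)})+\sigma_k\zeta_k$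 and $\zeta_k\sim\mathcal N(0,I_{d_k})$ is independent of $x$. *)

theory Defs
  imports "HOL-Probability.Probability"
begin

text \<open>Vectors in R^n are represented as functions nat => real, only the
coordinates 0..n-1 being relevant.\<close>

definition sqnorm :: "nat \<Rightarrow> (nat \<Rightarrow> real) \<Rightarrow> real" where
  "sqnorm n v = (\<Sum>i<n. (v i)^2)"

definition gauss :: "nat \<Rightarrow> real \<Rightarrow> (nat \<Rightarrow> real) measure" where
  "gauss n s = PiM {..<n} (\<lambda>_. density lborel (normal_density 0 s))"

text \<open>A partition of {0..<dk} into dk1 blocks of size 2, given by the block map
b : {0..<dk} -> {0..<dk1} (b i = index of the block containing i).\<close>
definition pair_partition :: "(nat \<Rightarrow> nat) \<Rightarrow> nat \<Rightarrow> nat \<Rightarrow> bool" where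
  "pair_partition b dk dk1 \<longleftrightarrow>
     (\<forall>i<dk. b i < dk1) \<and> (\<forall>j<dk1. card {i. i < dk \<and> b i = j} = 2)"

definition Dop :: "(nat \<Rightarrow> nat) \<Rightarrow> nat \<Rightarrow> (nat \<Rightarrow> real) \<Rightarrow> (nat \<Rightarrow> real)" where
  "Dop b dk y = (\<lambda>j. (\<Sum>i\<in>{i. i < dk \<and> b i = j}. y i) / 2)"

definition Uop :: "(nat \<Rightarrow> nat) \<Rightarrow> (nat \<Rightarrow> real) \<Rightarrow> (nat \<Rightarrow> real)" where
  "Uop b z = (\<lambda>i. z (b i))"

text \<open>down bs d K m y = x^(K-m) when x^(K) = y; bs k is the block map of level k,
d k the dimension of level k.\<close>
primrec down :: "(nat \<Rightarrow> nat \<Rightarrow> nat) \<Rightarrow> (nat \<Rightarrow> nat) \<Rightarrow> nat \<Rightarrow> nat \<Rightarrow> (nat \<Rightarrow> real) \<Rightarrow> (nat \<Rightarrow> real)" where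
  "down bs d K 0 y = y"
| "down bs d K (Suc m) y = Dop (bs (K - m)) (d (K - m)) (down bs d K m y)"

definition level :: "(nat \<Rightarrow> nat \<Rightarrow> nat) \<Rightarrow> (nat \<Rightarrow> nat) \<Rightarrow> nat \<Rightarrow> nat \<Rightarrow> (nat \<Rightarrow> real) \<Rightarrow> (nat \<Rightarrow> real)" where
  "level bs d K k y = down bs d K (K - k) y"

text \<open>Direct model cost L_A = E|x - x0|^2, x0 ~ N(0, sigma^2 I) independent of x
(expectation under the product law, written as an iterated integral).\<close>
definition LA :: "'a measure \<Rightarrow> ('a \<Rightarrow> nat \<Rightarrow> real) \<Rightarrow> nat \<Rightarrow> real \<Rightarrow> real" where
  "LA M X dK \<sigma> = (\<integral>\<omega>. (\<integral>z. sqnorm dK (\<lambda>i. X \<omega> i - z i) \<partial>gauss dK \<sigma>) \<partial>M)"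

definition L1 :: "'a measure \<Rightarrow> (nat \<Rightarrow> nat \<Rightarrow> nat) \<Rightarrow> (nat \<Rightarrow> nat) \<Rightarrow> nat \<Rightarrow>
    ('a \<Rightarrow> nat \<Rightarrow> real) \<Rightarrow> real \<Rightarrow> real" where
  "L1 M bs d K X \<sigma> =
     (\<integral>\<omega>. (\<integral>z. sqnorm (d 1) (\<lambda>i. level bs d K 1 (X \<omega>) i - z i) \<partial>gauss (d 1) \<sigma>) \<partial>M)"

text \<open>Cascaded model cost at level k >= 2: x0^(k) = U_k (D_k x^(k)) + sigma_k zeta_k,
zeta_k ~ N(0, I) independent of x.\<close>
definition Lk :: "'a measure \<Rightarrow> (nat \<Rightarrow> nat \<Rightarrow> nat) \<Rightarrow> (nat \<Rightarrow> nat) \<Rightarrow> nat \<Rightarrow>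
    ('a \<Rightarrow> nat \<Rightarrow> real) \<Rightarrow> real \<Rightarrow> nat \<Rightarrow> real" where
  "Lk M bs d K X \<sigma>k k =
     (\<integral>\<omega>. (\<integral>\<zeta>. sqnorm (d k)
        (\<lambda>i. level bs d K k (X \<omega>) i
              - (Uop (bs k) (Dop (bs k) (d k) (level bs d K k (X \<omega>))) i + \<sigma>k * \<zeta> i))
        \<partial>gauss (d k) 1) \<partial>M)"

definition Lcasc :: "'a measure \<Rightarrow> (nat \<Rightarrow> nat \<Rightarrow> nat) \<Rightarrow> (nat \<Rightarrow> nat) \<Rightarrow> nat \<Rightarrow>
    ('a \<Rightarrow> nat \<Rightarrow> real) \<Rightarrow> (nat \<Rightarrow> real) \<Rightarrow> real \<Rightarrow> nat \<Rightarrow> real" where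
  "Lcasc M bs d K X sig \<sigma> k =
     (if k = 1 then L1 M bs d K X \<sigma> else Lk M bs d K X (sig k) k)"

end

theory Submission
  imports Defs
begin

text \<open>Write E_k for the second moment of x^(k). An isotropic Gaussian of variance s^2 adds
  d s^2 to the expected squared distance from any point of R^d, and replacing each pair by its
  mean removes exactly twice the squared mean, so |x^(k) - U_k D_k x^(k)|^2 =
  |x^(k)|^2 - 2 |x^(k-1)|^2. Hence L_A = E_K + d_K sigma^2, L_1 = E_1 + d_1 sigma^2 and
  L_k = E_k - 2 E_(k-1) + d_k sigma_k^2. For the dyadic schedule d_k L_k =
  d_k E_k - 4 d_(k-1) E_(k-1) + (d_1 sigma)^2, which telescopes to
  d_K E_K - 3 (sum of d_k E_k over k < K) + K (d_1 sigma)^2, whereas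
  d_K L_A = d_K E_K + 4^(K-1) (d_1 sigma)^2, and K < 4^(K-1) once K >= 2.\<close>

lemma has_bochner_integral_normal_square_affine:
  fixes s c t :: real
  assumes "s > 0"
  shows "has_bochner_integral (density lborel (normal_density 0 s)) (\<lambda>z. (c - t * z)^2)
           (c^2 + t^2 * s^2)"
proof (rule has_bochner_integral_density)
  let ?n = "normal_density 0 s"
  have m0: "has_bochner_integral lborel ?n 1"
    using normal_moment_even[OF assms, of 0 0] by simp
  have m1: "has_bochner_integral lborel (\<lambda>z. ?n z * z) 0"
    using normal_moment_odd[OF assms, of 0 0] by simp
  have m2: "has_bochner_integral lborel (\<lambda>z. ?n z * z^2) (s^2)"
    using normal_moment_even[OF assms, of 0 1] by (simp add: power2_eq_square)
  have "has_bochner_integral lborel (\<lambda>z. c^2 * ?n z + (-2*c*t) * (?n z * z) + t^2 * (?n z * z^2))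
      (c^2 * 1 + (-2*c*t) * 0 + t^2 * s^2)"
    by (intro has_bochner_integral_add has_bochner_integral_mult_right m0 m1 m2)
  then show "has_bochner_integral lborel (\<lambda>z. ?n z *\<^sub>R (c - t * z)^2) (c^2 + t^2 * s^2)"
    by (simp add: power2_eq_square algebra_simps)
qed auto

lemma has_bochner_integral_gauss_coordinate:
  fixes s c t :: real
  assumes "s > 0" "i < n"
  shows "has_bochner_integral (gauss n s) (\<lambda>z. (c - t * z i)^2) (c^2 + t^2 * s^2)"
proof -
  let ?N = "density lborel (normal_density 0 s)"
  have proj: "(\<lambda>z. z i) \<in> measurable (gauss n s) ?N"
    unfolding gauss_def using assms(2) by (intro measurable_component_singleton) simp
  have "distr (gauss n s) ?N (\<lambda>z. z i) = ?N"
    unfolding gauss_def using assms by (intro distr_PiM_component prob_space_normal_density) auto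
  then have "has_bochner_integral (distr (gauss n s) ?N (\<lambda>z. z i)) (\<lambda>x. (c - t * x)^2)
      (c^2 + t^2 * s^2)"
    using has_bochner_integral_normal_square_affine[OF assms(1)] by simp
  then show ?thesis
    using proj by (simp add: has_bochner_integral_iff integrable_distr_eq integral_distr)
qed

lemma integral_sqnorm_gauss:
  fixes s t :: real
  assumes "s > 0"
  shows "(\<integral>z. sqnorm n (\<lambda>i. a i - t * z i) \<partial>gauss n s) = sqnorm n a + n * t^2 * s^2"
proof -
  have "has_bochner_integral (gauss n s) (\<lambda>z. sqnorm n (\<lambda>i. a i - t * z i))
      (\<Sum>i<n. (a i)^2 + t^2 * s^2)"
    unfolding sqnorm_def
    by (intro has_bochner_integral_sum has_bochner_integral_gauss_coordinate assms) simp
  then show ?thesis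
    by (simp add: has_bochner_integral_integral_eq sum.distrib sqnorm_def)
qed

lemma sqnorm_nonneg: "0 \<le> sqnorm n v"
  unfolding sqnorm_def by (intro sum_nonneg) simp

text \<open>Within a block with entries a, b and mean m: (a - m)^2 + (b - m)^2 = a^2 + b^2 - 2 m^2.\<close>
lemma sqnorm_diff_Uop_Dop:
  assumes "pair_partition b dk dk1"
  shows "sqnorm dk (\<lambda>i. y i - Uop b (Dop b dk y) i) = sqnorm dk y - 2 * sqnorm dk1 (Dop b dk y)"
proof -
  let ?m = "Dop b dk y"
  let ?B = "\<lambda>j. {i. i \<in> {..<dk} \<and> b i = j}"
  have blocks: "\<forall>i<dk. b i < dk1" and card_block: "\<And>j. j < dk1 \<Longrightarrow> card (?B j) = 2"
    using assms unfolding pair_partition_def by auto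
  have by_blocks: "(\<Sum>i<dk. h i) = (\<Sum>j<dk1. \<Sum>i\<in>?B j. h i)" for h :: "nat \<Rightarrow> real"
    by (rule sum.group[symmetric]) (use blocks in auto)
  have block_sum: "(\<Sum>i\<in>?B j. y i) = 2 * ?m j" for j
    by (simp add: Dop_def)
  have per_block: "(\<Sum>i\<in>?B j. (y i - Uop b ?m i)^2) = (\<Sum>i\<in>?B j. (y i)^2) - 2 * (?m j)^2"
    if "j < dk1" for j
  proof -
    have "(\<Sum>i\<in>?B j. (y i - Uop b ?m i)^2) = (\<Sum>i\<in>?B j. (y i)^2 - 2 * ?m j * y i + (?m j)^2)"
      by (rule sum.cong) (auto simp: Uop_def power2_eq_square algebra_simps)
    also have "\<dots> = (\<Sum>i\<in>?B j. (y i)^2) - 2 * ?m j * (\<Sum>i\<in>?B j. y i) + card (?B j) * (?m j)^2"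
      by (simp add: sum.distrib sum_subtractf sum_distrib_left)
    also have "\<dots> = (\<Sum>i\<in>?B j. (y i)^2) - 2 * ?m j * (2 * ?m j) + 2 * (?m j)^2"
      by (simp only: block_sum card_block[OF that] of_nat_numeral)
    finally show ?thesis
      by (simp add: power2_eq_square)
  qed
  have "sqnorm dk (\<lambda>i. y i - Uop b ?m i) = (\<Sum>j<dk1. \<Sum>i\<in>?B j. (y i - Uop b ?m i)^2)"
    unfolding sqnorm_def by (rule by_blocks)
  also have "\<dots> = (\<Sum>j<dk1. (\<Sum>i\<in>?B j. (y i)^2) - 2 * (?m j)^2)"
    by (intro sum.cong refl per_block) simp
  also have "\<dots> = sqnorm dk y - 2 * sqnorm dk1 ?m"
    by (simp add: sqnorm_def by_blocks sum_subtractf sum_distrib_left)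
  finally show ?thesis .
qed

lemma sqnorm_Dop_le:
  assumes "pair_partition b dk dk1"
  shows "2 * sqnorm dk1 (Dop b dk y) \<le> sqnorm dk y"
  using sqnorm_diff_Uop_Dop[OF assms, of y] sqnorm_nonneg[of dk "\<lambda>i. y i - Uop b (Dop b dk y) i"]
  by linarith

lemma level_top [simp]: "level bs d K K y = y"
  by (simp add: level_def)

lemma level_pred:
  assumes "1 \<le> k" "k \<le> K"
  shows "level bs d K (k - 1) y = Dop (bs k) (d k) (level bs d K k y)"
proof -
  have "K - (k - 1) = Suc (K - k)" "K - (K - k) = k"
    using assms by simp_all
  then show ?thesis
    by (simp add: level_def)
qed

lemma borel_measurable_Dop:
  assumes "\<And>i. i < dk \<Longrightarrow> (\<lambda>\<omega>. y \<omega> i) \<in> borel_measurable M"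
  shows "(\<lambda>\<omega>. Dop b dk (y \<omega>) j) \<in> borel_measurable M"
  unfolding Dop_def using assms by (intro borel_measurable_divide borel_measurable_sum) auto

lemma borel_measurable_down:
  assumes "\<And>i. i < d K \<Longrightarrow> (\<lambda>\<omega>. X \<omega> i) \<in> borel_measurable M"
  shows "i < d (K - m) \<Longrightarrow> (\<lambda>\<omega>. down bs d K m (X \<omega>) i) \<in> borel_measurable M"
  by (induction m arbitrary: i) (simp_all add: assms borel_measurable_Dop)

lemma borel_measurable_level:
  assumes "\<And>i. i < d K \<Longrightarrow> (\<lambda>\<omega>. X \<omega> i) \<in> borel_measurable M"
    and "k \<le> K" "i < d k"
  shows "(\<lambda>\<omega>. level bs d K k (X \<omega>) i) \<in> borel_measurable M"
  unfolding level_def using assms by (intro borel_measurable_down) simp_all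

lemma borel_measurable_sqnorm:
  assumes "\<And>i. i < n \<Longrightarrow> (\<lambda>\<omega>. v \<omega> i) \<in> borel_measurable M"
  shows "(\<lambda>\<omega>. sqnorm n (v \<omega>)) \<in> borel_measurable M"
  unfolding sqnorm_def using assms by (intro borel_measurable_sum borel_measurable_power) auto

lemma LA_eq:
  assumes "prob_space M" "\<sigma> > 0" "integrable M (\<lambda>\<omega>. sqnorm n (X \<omega>))"
  shows "LA M X n \<sigma> = (\<integral>\<omega>. sqnorm n (X \<omega>) \<partial>M) + n * \<sigma>^2"
proof -
  interpret prob_space M by fact
  have "LA M X n \<sigma> = (\<integral>\<omega>. sqnorm n (X \<omega>) + n * \<sigma>^2 \<partial>M)"
    unfolding LA_def using integral_sqnorm_gauss[OF assms(2), of n _ 1] by simp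
  then show ?thesis
    using assms(3) by (simp add: prob_space)
qed

lemma L1_eq_LA: "L1 M bs d K X \<sigma> = LA M (\<lambda>\<omega>. level bs d K 1 (X \<omega>)) (d 1) \<sigma>"
  by (simp add: L1_def LA_def)

locale cascade =
  fixes M :: "'a measure" and bs :: "nat \<Rightarrow> nat \<Rightarrow> nat" and d :: "nat \<Rightarrow> nat" and K :: nat
    and X :: "'a \<Rightarrow> nat \<Rightarrow> real"
  assumes prob: "prob_space M"
    and partition: "\<And>k. 2 \<le> k \<Longrightarrow> k \<le> K \<Longrightarrow> pair_partition (bs k) (d k) (d (k - 1))"
    and measurable_X: "\<And>i. i < d K \<Longrightarrow> (\<lambda>\<omega>. X \<omega> i) \<in> borel_measurable M"
    and square_integrable_X: "\<And>i. i < d K \<Longrightarrow> integrable M (\<lambda>\<omega>. (X \<omega> i)^2)"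
begin

definition moment :: "nat \<Rightarrow> real"
  where "moment k = (\<integral>\<omega>. sqnorm (d k) (level bs d K k (X \<omega>)) \<partial>M)"

lemma moment_nonneg: "0 \<le> moment k"
  unfolding moment_def by (intro integral_nonneg_AE) (simp add: sqnorm_nonneg)

lemma integrable_sqnorm_level:
  assumes "1 \<le> k" "k \<le> K"
  shows "integrable M (\<lambda>\<omega>. sqnorm (d k) (level bs d K k (X \<omega>)))"
  using \<open>k \<le> K\<close>
proof (induction k rule: inc_induct)
  case base
  show ?case
    unfolding sqnorm_def using square_integrable_X by (intro Bochner_Integration.integrable_sum) simp
next
  case (step n)
  show ?case
  proof (rule Bochner_Integration.integrable_bound[OF step.IH])
    show "(\<lambda>\<omega>. sqnorm (d n) (level bs d K n (X \<omega>))) \<in> borel_measurable M"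
      using step measurable_X by (intro borel_measurable_sqnorm borel_measurable_level) simp_all
    have "sqnorm (d n) (level bs d K n y) \<le> sqnorm (d (Suc n)) (level bs d K (Suc n) y)" for y
    proof -
      have "2 * sqnorm (d n) (level bs d K n y) \<le> sqnorm (d (Suc n)) (level bs d K (Suc n) y)"
        using sqnorm_Dop_le[OF partition[of "Suc n"]] level_pred[of "Suc n" K] step \<open>1 \<le> k\<close>
        by simp
      then show ?thesis
        using sqnorm_nonneg[of "d n" "level bs d K n y"] by linarith
    qed
    then show "AE \<omega> in M. norm (sqnorm (d n) (level bs d K n (X \<omega>)))
        \<le> norm (sqnorm (d (Suc n)) (level bs d K (Suc n) (X \<omega>)))"
      by (simp add: sqnorm_nonneg)
  qed
qed

lemma LA_eq_moment:
  fixes \<sigma> :: real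
  shows "\<sigma> > 0 \<Longrightarrow> 1 \<le> K \<Longrightarrow> LA M X (d K) \<sigma> = moment K + d K * \<sigma>^2"
  using LA_eq[OF prob, of \<sigma> "d K" X] integrable_sqnorm_level[of K] by (simp add: moment_def)

lemma Lcasc_1_eq:
  fixes sig :: "nat \<Rightarrow> real" and \<sigma> :: real
  shows "\<sigma> > 0 \<Longrightarrow> 1 \<le> K \<Longrightarrow> Lcasc M bs d K X sig \<sigma> 1 = moment 1 + d 1 * \<sigma>^2"
  using LA_eq[OF prob] integrable_sqnorm_level[of 1]
  by (simp add: Lcasc_def L1_eq_LA moment_def)

lemma Lcasc_eq:
  fixes sig :: "nat \<Rightarrow> real" and \<sigma> :: real
  assumes "2 \<le> k" "k \<le> K"
  shows "Lcasc M bs d K X sig \<sigma> k = moment k - 2 * moment (k - 1) + d k * (sig k)^2"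
proof -
  interpret prob_space M by (fact prob)
  let ?y = "\<lambda>\<omega>. level bs d K k (X \<omega>)"
  have residual: "(\<integral>\<zeta>. sqnorm (d k) (\<lambda>i. y i - (Uop (bs k) (Dop (bs k) (d k) y) i + sig k * \<zeta> i))
        \<partial>gauss (d k) 1)
      = sqnorm (d k) y - 2 * sqnorm (d (k - 1)) (Dop (bs k) (d k) y) + d k * (sig k)^2" for y
    using integral_sqnorm_gauss[of 1 "d k" "\<lambda>i. y i - Uop (bs k) (Dop (bs k) (d k) y) i" "sig k"]
      sqnorm_diff_Uop_Dop[OF partition[OF assms]]
    by (simp add: algebra_simps)
  have pred: "level bs d K (k - 1) y = Dop (bs k) (d k) (level bs d K k y)" for y
    using assms by (intro level_pred) simp_all
  have "Lcasc M bs d K X sig \<sigma> k = (\<integral>\<omega>. sqnorm (d k) (?y \<omega>)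
      - 2 * sqnorm (d (k - 1)) (level bs d K (k - 1) (X \<omega>)) + d k * (sig k)^2 \<partial>M)"
    unfolding pred using assms by (simp add: Lcasc_def Lk_def residual)
  then show ?thesis
    using assms integrable_sqnorm_level[of k] integrable_sqnorm_level[of "k - 1"]
    by (simp add: moment_def prob_space)
qed

end

lemma dyadic_schedule:
  fixes d :: "nat \<Rightarrow> nat" and d1 :: nat and sig :: "nat \<Rightarrow> real" and \<sigma> :: real
  assumes d: "\<And>k. d k = 2 ^ (k - 1) * d1" and sig: "\<And>k. sig k = \<sigma> / 2 ^ (k - 1)"
  shows "2 \<le> k \<Longrightarrow> real (d k) = 2 * real (d (k - 1))"
    and "real (d k) * sig k = real d1 * \<sigma>"
    and "(real (d k) * \<sigma>)^2 = 4 ^ (k - 1) * (real d1 * \<sigma>)^2"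
proof -
  assume "2 \<le> k"
  then have "k - 1 = Suc (k - 1 - 1)"
    by simp
  then show "real (d k) = 2 * real (d (k - 1))"
    unfolding d by (metis of_nat_mult of_nat_numeral power_Suc mult.assoc)
qed (simp_all add: d sig power_mult_distrib power2_eq_square flip: power_mult_distrib)

lemma sum_cascade_telescope:
  fixes a e :: "nat \<Rightarrow> real"
  assumes "a 1 = e 1 + c" "\<And>k. 2 \<le> k \<Longrightarrow> k \<le> n \<Longrightarrow> a k = e k - 4 * e (k - 1) + c"
    and "1 \<le> n"
  shows "(\<Sum>k=1..n. a k) = e n - 3 * (\<Sum>k=1..<n. e k) + n * c"
  using assms(3,2)
proof (induction n rule: nat_induct_at_least)
  case base
  then show ?case using assms(1) by simp
next
  case (Suc n)
  then have "a (Suc n) = e (Suc n) - 4 * e n + c"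
    by simp
  with Suc show ?case
    by (simp add: algebra_simps)
qed

lemma less_four_power: "2 \<le> n \<Longrightarrow> n < 4 ^ (n - 1)"
proof (induction n rule: nat_induct_at_least)
  case (Suc n)
  then show ?case by (cases n) auto
qed simp

lemma sum_cascade_less:
  fixes a e :: "nat \<Rightarrow> real"
  assumes "a 1 = e 1 + c" "\<And>k. 2 \<le> k \<Longrightarrow> k \<le> n \<Longrightarrow> a k = e k - 4 * e (k - 1) + c"
    and "2 \<le> n" "\<And>k. 0 \<le> e k" "c > 0"
  shows "(\<Sum>k=1..n. a k) < e n + 4 ^ (n - 1) * c"
proof -
  have "real n < 4 ^ (n - 1)"
    using less_four_power[OF assms(3)] by (metis of_nat_less_iff of_nat_numeral of_nat_power)
  then have "n * c < 4 ^ (n - 1) * c"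
    using assms(5) by simp
  moreover have "0 \<le> (\<Sum>k=1..<n. e k)"
    using assms(4) by (simp add: sum_nonneg)
  ultimately show ?thesis
    using sum_cascade_telescope[of a e c n] assms(1-3) by simp
qed

lemma (in cascade) dyadic_weighted_cost_sum_less:
  fixes d1 :: nat and \<sigma> :: real and sig :: "nat \<Rightarrow> real"
  assumes d: "\<And>k. d k = 2 ^ (k - 1) * d1" and sig: "\<And>k. sig k = \<sigma> / 2 ^ (k - 1)"
    and "2 \<le> K" "d1 > 0" "\<sigma> > 0"
  shows "(\<Sum>k=1..K. d k * Lcasc M bs d K X sig \<sigma> k) < d K * LA M X (d K) \<sigma>"
proof -
  note dims = dyadic_schedule[OF d sig]
  have K1: "1 \<le> K"
    using assms(3) by simp
  define e where "e k = d k * moment k" for k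
  define c where "c = (d1 * \<sigma>)^2"
  have "d K * LA M X (d K) \<sigma> = e K + (d K * \<sigma>)^2"
    using LA_eq_moment[OF assms(5) K1] by (simp add: e_def power2_eq_square algebra_simps)
  then have top: "d K * LA M X (d K) \<sigma> = e K + 4 ^ (K - 1) * c"
    by (simp only: dims(3) c_def)
  have bottom: "d 1 * Lcasc M bs d K X sig \<sigma> 1 = e 1 + c"
    using Lcasc_1_eq[OF assms(5) K1] by (simp add: d e_def c_def power2_eq_square algebra_simps)
  have step: "d k * Lcasc M bs d K X sig \<sigma> k = e k - 4 * e (k - 1) + c" if "2 \<le> k" "k \<le> K" for k
  proof -
    have "d k * Lcasc M bs d K X sig \<sigma> k = d k * moment k - 2 * d k * moment (k - 1) + (d k * sig k)^2"
      using that by (simp add: Lcasc_eq power2_eq_square algebra_simps)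
    then show ?thesis
      unfolding dims(2) e_def c_def using dims(1)[OF that(1)] by simp
  qed
  show ?thesis
    unfolding top using sum_cascade_less[of "\<lambda>k. d k * Lcasc M bs d K X sig \<sigma> k" e c K]
      bottom step assms(3-5) by (simp add: e_def moment_nonneg c_def)
qed

theorem theorem2:
  fixes M :: "'a measure" and X :: "'a \<Rightarrow> nat \<Rightarrow> real"
    and K d1 :: nat and d :: "nat \<Rightarrow> nat" and bs :: "nat \<Rightarrow> nat \<Rightarrow> nat"
    and \<sigma> \<alpha> C :: real and sig :: "nat \<Rightarrow> real"
  assumes "prob_space M"
    and "K \<ge> 2" and "d1 > 0"
    and "\<And>k. d k = 2 ^ (k - 1) * d1"
    and "\<And>k. sig k = \<sigma> / 2 ^ (k - 1)"
    and "\<sigma> > 0" and "\<alpha> > 0" and "C > 0"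
    and "\<And>k. 2 \<le> k \<Longrightarrow> k \<le> K \<Longrightarrow> pair_partition (bs k) (d k) (d (k - 1))"
    and "\<And>i. i < d K \<Longrightarrow> (\<lambda>\<omega>. X \<omega> i) \<in> borel_measurable M"
    and "\<And>i. i < d K \<Longrightarrow> integrable M (\<lambda>\<omega>. (X \<omega> i)^2)"
  shows "\<alpha> * C * LA M X (d K) \<sigma> * d K
           > (\<Sum>k=1..K. \<alpha> * C * Lcasc M bs d K X sig \<sigma> k * d k)
       \<and> (\<Sum>k=1..K. d k * Lcasc M bs d K X sig \<sigma> k) < d K * LA M X (d K) \<sigma>"
proof -
  interpret cascade M bs d K X
    using assms(1,9-11) by (rule cascade.intro)
  have weighted: "(\<Sum>k=1..K. d k * Lcasc M bs d K X sig \<sigma> k) < d K * LA M X (d K) \<sigma>"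
    using assms(4,5,2,3,6) by (rule dyadic_weighted_cost_sum_less)
  have "(\<Sum>k=1..K. \<alpha> * C * Lcasc M bs d K X sig \<sigma> k * d k)
      = \<alpha> * C * (\<Sum>k=1..K. d k * Lcasc M bs d K X sig \<sigma> k)"
    by (simp add: sum_distrib_left mult_ac)
  also have "\<dots> < \<alpha> * C * (d K * LA M X (d K) \<sigma>)"
    using weighted assms(7,8) by simp
  finally show ?thesis
    using weighted by (simp add: mult_ac)
qed

end
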